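(* Let $\mathbf D_0\in\mathbb R^{m\times p}$ have unit-norm columns, $\mathbf W\in\mathcal W_{\mathbf D_0}$, $\mathbf v\in\mathcal S^p$, and write $\mathbf D(t')=\mathbf D(\mathbf W,\mathbf v,t')$. Let $\mathbf x\in\mathbb R^m$, and $\boldsymbol\alpha_0\in\mathbb R^p$ with support $J$, $|J|=k$. Assume $k\mu(t)\le1/2$, $0\le t'\le t$, $\frac94\lambda\le\underline\alpha\le\min_{j\in J}|[\boldsymbol\alpha_0]_j|$ with $\lambda>0$, and $$\|[\mathbf D(t')]_J^\top(\mathbf x-\mathbf D(t')\boldsymbol\alpha_0)\|_\infty<\lambda(2-Q_t^2),\qquad\|[\mathbf D(t')]_{J^c}^\top(\mathbf I-\mathbf P_J(t'))\mathbf x\|_\infty<\lambda(2-Q_t^2).$$ Then the vector $\hat{\boldsymbol\alpha}(t')$ given by $\hat{\boldsymbol\alpha}(t')_J=([\mathbf D(t')]_J^\top[\mathbf D(t')]_J)^{-1}([\mathbf D(t')]_J^\top\mathbf x-\lambda\,\mathrm{sign}([\boldsymbol\alpha_0]_J))$, $\hat{\boldsymbol\alpha}(t')_{J^c}=\mathbf 0$, is the unique solution of $\min_{\boldsymbol\alpha\in\mathbb R^p}\frac12\|\mathbf x-\mathbf D(t')\boldsymbol\alpha\|_2^2+\lambda\|\boldsymbol\alpha\|_1$.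
   Context: $\mu_0=\max_{i\ne j}|[\mathbf d_0^i]^\top\mathbf d_0^j|$, $\mu(t)=\mu_0+3t$, $Q_t=1/\sqrt{1-k\mu(t)}$. $\mathcal S^p$ unit sphere; $\mathcal W_{\mathbf D_0}=\{\mathbf W:\mathrm{diag}(\mathbf W^\top\mathbf D_0)=\mathbf 0,\mathrm{diag}(\mathbf W^\top\mathbf W)=\mathbf 1\}$; $\mathbf D(\mathbf W,\mathbf v,t)=\mathbf D_0\mathrm{Diag}[\cos(\mathbf vt)]+\mathbf W\mathrm{Diag}[\sin(\mathbf vt)]$. $\mathbf M_J$ denotes the columns indexed by $J$; $\mathbf P_J(t')$ is the orthogonal projector onto the span of $[\mathbf D(t')]_J$. *)

theory Defs
  imports "HOL-Analysis.Analysis"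
begin

text \<open>Matrices D :: real^'p^'m are m x p (rows indexed by 'm, columns by 'p).\<close>

definition mutual_coherence :: "real^'p^'m \<Rightarrow> real" where
  "mutual_coherence D0 =
     Max (insert 0 {\<bar>column i D0 \<bullet> column j D0\<bar> | i j. i \<noteq> j})"

definition mu_t :: "real^'p^'m \<Rightarrow> real \<Rightarrow> real" where
  "mu_t D0 t = mutual_coherence D0 + 3 * t"

definition Q_t :: "real^'p^'m \<Rightarrow> nat \<Rightarrow> real \<Rightarrow> real" where
  "Q_t D0 k t = 1 / sqrt (1 - real k * mu_t D0 t)"

definition W_set :: "real^'p^'m \<Rightarrow> (real^'p^'m) set" where
  "W_set D0 = {W. (\<forall>j. column j W \<bullet> column j D0 = 0) \<and> (\<forall>j. column j W \<bullet> column j W = 1)}"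

definition Dpath :: "real^'p^'m \<Rightarrow> real^'p^'m \<Rightarrow> real^'p \<Rightarrow> real \<Rightarrow> real^'p^'m" where
  "Dpath D0 W v t = (\<chi> i j. D0$i$j * cos (v$j * t) + W$i$j * sin (v$j * t))"

definition linf_on :: "'p set \<Rightarrow> ('p \<Rightarrow> real) \<Rightarrow> real" where
  "linf_on A f = Max (insert 0 ((\<lambda>j. \<bar>f j\<bar>) ` A))"

definition l1norm :: "real^'p \<Rightarrow> real" where
  "l1norm a = (\<Sum>j\<in>UNIV. \<bar>a$j\<bar>)"

definition orth_proj :: "('a::real_inner) set \<Rightarrow> 'a \<Rightarrow> 'a" where
  "orth_proj S x = (THE y. y \<in> S \<and> (\<forall>z\<in>S. (x - y) \<bullet> z = 0))"

definition proj_cols :: "real^'p^'m \<Rightarrow> 'p set \<Rightarrow> real^'m \<Rightarrow> real^'m" where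
  "proj_cols D J x = orth_proj (span ((\<lambda>j. column j D) ` J)) x"

text \<open>Gram matrix [D]_J^T [D]_J embedded block-diagonally into a p x p matrix, with the
 identity on the J^c block; its inverse restricted to J is ([D]_J^T [D]_J)^{-1}.\<close>
definition gram_J_ext :: "real^'p^'m \<Rightarrow> 'p set \<Rightarrow> real^'p^'p" where
  "gram_J_ext D J = (\<chi> i j. if i \<in> J \<and> j \<in> J then column i D \<bullet> column j D
                            else if i = j then 1 else 0)"

definition alpha_hat :: "real^'p^'m \<Rightarrow> real^'m \<Rightarrow> real \<Rightarrow> real^'p \<Rightarrow> real^'p" where
  "alpha_hat D x lam alpha0 =
    (let J = {j. alpha0$j \<noteq> 0};
         b = (\<chi> j. if j \<in> J then column j D \<bullet> x - lam * sgn (alpha0$j) else 0);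
         y = matrix_inv (gram_J_ext D J) *v b
     in (\<chi> j. if j \<in> J then y$j else 0))"

definition lasso_obj :: "real^'p^'m \<Rightarrow> real^'m \<Rightarrow> real \<Rightarrow> real^'p \<Rightarrow> real" where
  "lasso_obj D x lam a = 1/2 * (norm (x - D *v a))\<^sup>2 + lam * l1norm a"

end

theory Submission
  imports Defs
begin

text \<open>The Gram matrix of the columns of \<open>D(t')\<close> indexed by \<open>J\<close> has unit diagonal and
  off-diagonal entries bounded by the coherence, which along the path stays below \<open>\<mu>(t)\<close>
  because \<open>|sin (v\<^sub>j t')| \<le> t\<close>. It is therefore diagonally dominant: a coefficient vector
  is recovered from its image under the Gram matrix up to the factor
  \<open>Q\<^sub>t\<^sup>2 = 1 / (1 - k \<mu>(t))\<close>. Applied to \<open>\<alpha> - \<alpha>\<^sub>0\<close>, where \<open>\<alpha>\<close> is the candidate \<open>alpha_hat\<close>, this shows that \<open>\<alpha>\<close> lies within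
  \<open>\<lambda> Q\<^sup>2 (3 - Q\<^sup>2) \<le> 9\<lambda>/4\<close> of \<open>\<alpha>\<^sub>0\<close> on \<open>J\<close>, hence has the same signs, so it satisfies
  the Lasso optimality conditions on \<open>J\<close> with equality. Applied to \<open>P\<^sub>J x - D \<alpha>\<close> it bounds
  the correlations of the columns outside \<open>J\<close> with the residual strictly below \<open>\<lambda>\<close>.
  Strict dual feasibility together with injectivity of \<open>D\<close> on vectors supported in \<open>J\<close>
  makes \<open>\<alpha>\<close> the unique minimiser.\<close>

lemma span_image_sum:
  fixes d :: "'i \<Rightarrow> 'a::real_vector"
  assumes fin: "finite J" and y: "y \<in> span (d ` J)"
  shows "\<exists>c. y = (\<Sum>j\<in>J. c j *\<^sub>R d j)"
proof -
  define S where "S = range (\<lambda>c. \<Sum>j\<in>J. c j *\<^sub>R d j)"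
  have "subspace S"
    unfolding subspace_def S_def
  proof (intro conjI ballI allI)
    show "0 \<in> range (\<lambda>c. \<Sum>j\<in>J. c j *\<^sub>R d j)"
      by (rule range_eqI[of _ _ "\<lambda>_. 0"]) simp
    show "u + v \<in> range (\<lambda>c. \<Sum>j\<in>J. c j *\<^sub>R d j)"
      if "u \<in> range (\<lambda>c. \<Sum>j\<in>J. c j *\<^sub>R d j)" "v \<in> range (\<lambda>c. \<Sum>j\<in>J. c j *\<^sub>R d j)" for u v
    proof -
      from that obtain c c' where "u = (\<Sum>j\<in>J. c j *\<^sub>R d j)" "v = (\<Sum>j\<in>J. c' j *\<^sub>R d j)" by blast
      then show ?thesis
        by (intro range_eqI[of _ _ "\<lambda>j. c j + c' j"]) (simp add: scaleR_add_left sum.distrib)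
    qed
    show "r *\<^sub>R u \<in> range (\<lambda>c. \<Sum>j\<in>J. c j *\<^sub>R d j)"
      if "u \<in> range (\<lambda>c. \<Sum>j\<in>J. c j *\<^sub>R d j)" for r u
    proof -
      from that obtain c where "u = (\<Sum>j\<in>J. c j *\<^sub>R d j)" by blast
      then show ?thesis by (intro range_eqI[of _ _ "\<lambda>j. r * c j"]) (simp add: scaleR_sum_right)
    qed
  qed
  moreover have "d i \<in> S" if "i \<in> J" for i
    unfolding S_def using fin that
    by (intro range_eqI[of _ _ "\<lambda>j. if j = i then 1 else 0"])
      (simp add: sum.delta' if_distrib[of "\<lambda>r. r *\<^sub>R _"] cong: if_cong)
  ultimately have "span (d ` J) \<subseteq> S" by (intro span_minimal) auto
  then show ?thesis using y unfolding S_def by auto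
qed

locale coherent_family =
  fixes d :: "'i \<Rightarrow> 'a::real_inner" and J :: "'i set" and mu :: real
  assumes finite_J: "finite J"
    and unit: "i \<in> J \<Longrightarrow> d i \<bullet> d i = 1"
    and coherence: "i \<in> J \<Longrightarrow> i \<noteq> j \<Longrightarrow> \<bar>d i \<bullet> d j\<bar> \<le> mu"
    and mu_nonneg: "0 \<le> mu"
    and card_mu_less_1: "real (card J) * mu < 1"
begin

text \<open>The coefficient of largest modulus dominates its own row of the Gram matrix.\<close>
lemma gram_dominance:
  assumes i: "i \<in> J"
  shows "\<exists>i0\<in>J. (1 - real (card J) * mu) * \<bar>c i\<bar> \<le> \<bar>d i0 \<bullet> (\<Sum>j\<in>J. c j *\<^sub>R d j)\<bar>"
proof -
  have "Max ((\<lambda>j. \<bar>c j\<bar>) ` J) \<in> (\<lambda>j. \<bar>c j\<bar>) ` J" using finite_J i by (intro Max_in) auto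
  then obtain i0 where i0: "i0 \<in> J" and "\<bar>c i0\<bar> = Max ((\<lambda>j. \<bar>c j\<bar>) ` J)" by auto
  then have max: "\<And>j. j \<in> J \<Longrightarrow> \<bar>c j\<bar> \<le> \<bar>c i0\<bar>" using finite_J by simp
  have row: "d i0 \<bullet> (\<Sum>j\<in>J. c j *\<^sub>R d j) = c i0 + (\<Sum>j\<in>J - {i0}. c j * (d i0 \<bullet> d j))"
    using sum.remove[OF finite_J i0, of "\<lambda>j. c j * (d i0 \<bullet> d j)"] unit[OF i0]
    by (simp add: inner_sum_right)
  have "\<bar>\<Sum>j\<in>J - {i0}. c j * (d i0 \<bullet> d j)\<bar> \<le> (\<Sum>j\<in>J - {i0}. \<bar>c i0\<bar> * mu)"
    by (rule order_trans[OF sum_abs sum_mono])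
      (use max coherence[OF i0] in \<open>auto simp: abs_mult intro!: mult_mono'\<close>)
  also have "\<dots> = real (card J - 1) * (mu * \<bar>c i0\<bar>)"
    using finite_J i0 by (simp add: mult.commute)
  also have "\<dots> \<le> real (card J) * mu * \<bar>c i0\<bar>"
    unfolding mult.assoc using mu_nonneg by (intro mult_right_mono) auto
  finally have "(1 - real (card J) * mu) * \<bar>c i0\<bar> \<le> \<bar>d i0 \<bullet> (\<Sum>j\<in>J. c j *\<^sub>R d j)\<bar>"
    unfolding row by (simp add: algebra_simps)
  moreover have "(1 - real (card J) * mu) * \<bar>c i\<bar> \<le> (1 - real (card J) * mu) * \<bar>c i0\<bar>"
    using max[OF i] card_mu_less_1 by (intro mult_left_mono) auto
  ultimately show ?thesis using i0 by (meson order_trans)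
qed

lemma abs_coeff_le:
  assumes "\<And>i. i \<in> J \<Longrightarrow> \<bar>d i \<bullet> (\<Sum>j\<in>J. c j *\<^sub>R d j)\<bar> \<le> B" and "i \<in> J"
  shows "\<bar>c i\<bar> \<le> B / (1 - real (card J) * mu)"
  using gram_dominance[OF \<open>i \<in> J\<close>, of c] assms(1) card_mu_less_1
  by (auto simp: le_divide_eq mult.commute intro: order_trans)

lemma abs_coeff_less:
  assumes "\<And>i. i \<in> J \<Longrightarrow> \<bar>d i \<bullet> (\<Sum>j\<in>J. c j *\<^sub>R d j)\<bar> < B" and "i \<in> J"
  shows "\<bar>c i\<bar> < B / (1 - real (card J) * mu)"
  using gram_dominance[OF \<open>i \<in> J\<close>, of c] assms(1) card_mu_less_1
  by (auto simp: less_divide_eq mult.commute intro: order_le_less_trans)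

lemma independent_on_J:
  assumes "(\<Sum>j\<in>J. c j *\<^sub>R d j) = 0" and "i \<in> J"
  shows "c i = 0"
  using abs_coeff_le[of c 0 i] assms by simp

lemma abs_inner_outside_le:
  assumes "j \<notin> J" and "\<And>i. i \<in> J \<Longrightarrow> \<bar>c i\<bar> \<le> C"
  shows "\<bar>d j \<bullet> (\<Sum>i\<in>J. c i *\<^sub>R d i)\<bar> \<le> real (card J) * mu * C"
proof -
  have "\<bar>d j \<bullet> (\<Sum>i\<in>J. c i *\<^sub>R d i)\<bar> \<le> (\<Sum>i\<in>J. \<bar>c i\<bar> * \<bar>d i \<bullet> d j\<bar>)"
    unfolding inner_sum_right by (rule order_trans[OF sum_abs]) (simp add: abs_mult inner_commute)
  also have "\<dots> \<le> (\<Sum>i\<in>J. C * mu)"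
    using assms coherence by (intro sum_mono mult_mono') (auto, force)
  finally show ?thesis by (simp add: mult.commute)
qed

end

lemma mult_vec_eq_sum_columns:
  fixes D :: "real^'p^'m"
  assumes "\<And>j. j \<notin> J \<Longrightarrow> h$j = 0"
  shows "D *v h = (\<Sum>j\<in>J. h$j *\<^sub>R column j D)"
  unfolding matrix_mult_sum scalar_mult_eq_scaleR using assms by (intro sum.mono_neutral_right) auto

lemma lasso_obj_add:
  fixes D :: "real^'p^'m"
  shows "lasso_obj D x lam (a + h) - lasso_obj D x lam a =
     (norm (D *v h))\<^sup>2 / 2 +
     (\<Sum>j\<in>UNIV. lam * (\<bar>a$j + h$j\<bar> - \<bar>a$j\<bar>) - h$j * (column j D \<bullet> (x - D *v a)))"
proof -
  define r where "r = x - D *v a"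
  have "r \<bullet> (D *v h) = (\<Sum>j\<in>UNIV. h$j * (column j D \<bullet> r))"
    by (simp add: matrix_mult_sum scalar_mult_eq_scaleR inner_sum_right inner_commute)
  moreover have "x - D *v (a + h) = r - D *v h"
    unfolding r_def by (simp add: matrix_vector_right_distrib)
  ultimately show ?thesis
    unfolding lasso_obj_def l1norm_def r_def[symmetric]
    by (simp add: power2_norm_eq_inner inner_diff_left inner_diff_right inner_commute
        sum_subtractf sum_distrib_left sum.distrib algebra_simps)
qed

lemma lasso_unique_minimizer:
  fixes D :: "real^'p^'m"
  assumes lam: "0 \<le> lam"
    and on_support: "\<And>j. a$j \<noteq> 0 \<Longrightarrow> column j D \<bullet> (x - D *v a) = lam * sgn (a$j)"
    and off_support: "\<And>j. a$j = 0 \<Longrightarrow> \<bar>column j D \<bullet> (x - D *v a)\<bar> < lam"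
    and injective: "\<And>h. (\<And>j. a$j = 0 \<Longrightarrow> h$j = 0) \<Longrightarrow> D *v h = 0 \<Longrightarrow> h = 0"
  shows "{b. \<forall>c. lasso_obj D x lam b \<le> lasso_obj D x lam c} = {a}"
proof -
  \<comment> \<open>\<open>T h j \<ge> 0\<close> is the subgradient inequality for \<open>\<bar>_\<bar>\<close> at \<open>a$j\<close>\<close>
  define T where "T h j = lam * (\<bar>a$j + h$j\<bar> - \<bar>a$j\<bar>) - h$j * (column j D \<bullet> (x - D *v a))"
    for h j
  have T_nonneg: "0 \<le> T h j" for h j
  proof (cases "a$j = 0")
    case True
    have "h$j * (column j D \<bullet> (x - D *v a)) \<le> \<bar>h$j\<bar> * \<bar>column j D \<bullet> (x - D *v a)\<bar>"
      by (metis abs_ge_self abs_mult)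
    also have "\<dots> \<le> \<bar>h$j\<bar> * lam"
      using off_support[OF True] by (intro mult_left_mono) auto
    finally have "h$j * (column j D \<bullet> (x - D *v a)) \<le> \<bar>h$j\<bar> * lam" .
    then show ?thesis by (simp add: T_def True mult.commute)
  next
    case False
    have "0 \<le> \<bar>a$j + h$j\<bar> - \<bar>a$j\<bar> - h$j * sgn (a$j)"
      using False by (auto simp: sgn_if abs_if)
    moreover have "T h j = lam * (\<bar>a$j + h$j\<bar> - \<bar>a$j\<bar> - h$j * sgn (a$j))"
      unfolding T_def on_support[OF False] by (simp add: algebra_simps)
    ultimately show ?thesis using lam by simp
  qed
  have T_pos: "0 < T h j" if "a$j = 0" "h$j \<noteq> 0" for h j
  proof -
    have "h$j * (column j D \<bullet> (x - D *v a)) \<le> \<bar>h$j\<bar> * \<bar>column j D \<bullet> (x - D *v a)\<bar>"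
      by (metis abs_ge_self abs_mult)
    also have "\<dots> < \<bar>h$j\<bar> * lam"
      using off_support[OF that(1)] that(2) by (intro mult_strict_left_mono) auto
    finally have "h$j * (column j D \<bullet> (x - D *v a)) < \<bar>h$j\<bar> * lam" .
    then show ?thesis by (simp add: T_def that(1) mult.commute)
  qed
  have strict: "lasso_obj D x lam a < lasso_obj D x lam (a + h)" if "h \<noteq> 0" for h
  proof -
    have diff: "lasso_obj D x lam (a + h) - lasso_obj D x lam a =
        (norm (D *v h))\<^sup>2 / 2 + (\<Sum>j\<in>UNIV. T h j)"
      unfolding lasso_obj_add T_def ..
    show ?thesis
    proof (cases "\<exists>j. a$j = 0 \<and> h$j \<noteq> 0")
      case True
      then obtain j where "a$j = 0" "h$j \<noteq> 0" by blast
      then have "0 < (\<Sum>j\<in>UNIV. T h j)" using T_nonneg T_pos by (intro sum_pos2) auto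
      then show ?thesis using diff zero_le_power2[of "norm (D *v h)"] by linarith
    next
      case False
      then have "D *v h \<noteq> 0" using injective that by blast
      then have "0 < (norm (D *v h))\<^sup>2" by simp
      moreover have "0 \<le> (\<Sum>j\<in>UNIV. T h j)" using T_nonneg by (simp add: sum_nonneg)
      ultimately show ?thesis using diff by linarith
    qed
  qed
  show ?thesis
  proof (intro set_eqI iffI)
    fix b assume "b \<in> {b. \<forall>c. lasso_obj D x lam b \<le> lasso_obj D x lam c}"
    then have "lasso_obj D x lam b \<le> lasso_obj D x lam a" by simp
    then show "b \<in> {a}" using strict[of "b - a"] by (cases "b = a") auto
  next
    fix b assume "b \<in> {a}"
    moreover have "lasso_obj D x lam a \<le> lasso_obj D x lam c" for c
      using strict[of "c - a"] by (cases "c = a") auto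
    ultimately show "b \<in> {b. \<forall>c. lasso_obj D x lam b \<le> lasso_obj D x lam c}" by simp
  qed
qed

lemma gram_J_ext_mult_vec:
  fixes D :: "real^'p^'m"
  shows "(gram_J_ext D J *v u)$i =
     (if i \<in> J then column i D \<bullet> (\<Sum>j\<in>J. u$j *\<^sub>R column j D) else u$i)"
proof (cases "i \<in> J")
  case True
  have "(gram_J_ext D J *v u)$i = (\<Sum>j\<in>UNIV. if j \<in> J then (column i D \<bullet> column j D) * u$j else 0)"
    unfolding matrix_vector_mult_def gram_J_ext_def using True by (auto intro!: sum.cong)
  then show ?thesis
    using True by (simp add: sum.If_cases inner_sum_right mult.commute)
next
  case False
  then show ?thesis
    by (simp add: matrix_vector_mult_def gram_J_ext_def if_distrib[of "\<lambda>r. r * _"] cong: if_cong)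
qed

lemma invertible_gram_J_ext:
  fixes D :: "real^'p^'m"
  assumes injective: "\<And>h. (\<And>j. j \<notin> J \<Longrightarrow> h$j = 0) \<Longrightarrow> D *v h = 0 \<Longrightarrow> h = 0"
  shows "invertible (gram_J_ext D J)"
proof -
  have "u = 0" if u: "gram_J_ext D J *v u = 0" for u
  proof -
    have supp: "u$j = 0" if "j \<notin> J" for j
      using arg_cong[OF u, of "\<lambda>v. v$j"] that by (simp add: gram_J_ext_mult_vec)
    then have Du: "D *v u = (\<Sum>j\<in>J. u$j *\<^sub>R column j D)" by (rule mult_vec_eq_sum_columns)
    have "column i D \<bullet> (D *v u) = 0" if "i \<in> J" for i
      using arg_cong[OF u, of "\<lambda>v. v$i"] that by (simp add: gram_J_ext_mult_vec Du)
    then have "(D *v u) \<bullet> (D *v u) = 0"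
      by (subst (1) Du) (simp add: inner_sum_left)
    then show "u = 0" using injective supp by simp
  qed
  then show ?thesis
    using invertible_left_inverse matrix_left_invertible_ker by blast
qed

lemma invertible_mult_vec_matrix_inv:
  fixes A :: "real^'n^'n"
  assumes "invertible A"
  shows "A *v (matrix_inv A *v b) = b"
proof -
  have "A ** matrix_inv A = mat 1"
    using someI_ex[OF assms[unfolded invertible_def]] unfolding matrix_inv_def by blast
  then show ?thesis by (simp add: matrix_vector_mul_assoc)
qed

lemma alpha_hat_normal_equations:
  fixes D :: "real^'p^'m"
  assumes J: "J = {j. alpha0$j \<noteq> 0}"
    and injective: "\<And>h. (\<And>j. j \<notin> J \<Longrightarrow> h$j = 0) \<Longrightarrow> D *v h = 0 \<Longrightarrow> h = 0"
  shows alpha_hat_outside: "j \<notin> J \<Longrightarrow> alpha_hat D x lam alpha0 $ j = 0"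
    and alpha_hat_inside: "i \<in> J \<Longrightarrow>
      column i D \<bullet> (x - D *v alpha_hat D x lam alpha0) = lam * sgn (alpha0$i)"
proof -
  define b where "b = (\<chi> j. if j \<in> J then column j D \<bullet> x - lam * sgn (alpha0$j) else 0)"
  define y where "y = matrix_inv (gram_J_ext D J) *v b"
  have y: "gram_J_ext D J *v y = b"
    unfolding y_def by (intro invertible_mult_vec_matrix_inv invertible_gram_J_ext injective)
  have y_outside: "y$j = 0" if "j \<notin> J" for j
    using arg_cong[OF y, of "\<lambda>v. v$j"] that by (simp add: gram_J_ext_mult_vec b_def)
  have "alpha_hat D x lam alpha0 = y"
    unfolding alpha_hat_def Let_def J[symmetric] b_def[symmetric] y_def[symmetric]
    using y_outside by (simp add: vec_eq_iff)
  moreover have "D *v y = (\<Sum>j\<in>J. y$j *\<^sub>R column j D)"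
    using y_outside by (rule mult_vec_eq_sum_columns)
  ultimately show "j \<notin> J \<Longrightarrow> alpha_hat D x lam alpha0 $ j = 0"
    and "i \<in> J \<Longrightarrow> column i D \<bullet> (x - D *v alpha_hat D x lam alpha0) = lam * sgn (alpha0$i)"
    using y_outside arg_cong[OF y, of "\<lambda>v. v$i"]
    by (auto simp: gram_J_ext_mult_vec b_def inner_diff_right)
qed

lemma orth_proj_subspace:
  fixes S :: "'a::euclidean_space set"
  assumes S: "subspace S"
  shows "orth_proj S x \<in> S" and "z \<in> S \<Longrightarrow> (x - orth_proj S x) \<bullet> z = 0"
proof -
  obtain y r where decomp: "y \<in> span S" "\<And>w. w \<in> span S \<Longrightarrow> orthogonal r w" "x = y + r"
    using orthogonal_subspace_decomp_exists by blast
  have ex: "y \<in> S \<and> (\<forall>w\<in>S. (x - y) \<bullet> w = 0)"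
    using decomp span_eq_iff[THEN iffD2, OF S] by (auto simp: orthogonal_def)
  have uniq: "y1 = y2" if "y1 \<in> S \<and> (\<forall>w\<in>S. (x - y1) \<bullet> w = 0)"
      and "y2 \<in> S \<and> (\<forall>w\<in>S. (x - y2) \<bullet> w = 0)" for y1 y2
  proof -
    have "y1 - y2 \<in> S" using that S by (simp add: subspace_diff)
    have "(y1 - y2) \<bullet> (y1 - y2) = (x - y2) \<bullet> (y1 - y2) - (x - y1) \<bullet> (y1 - y2)"
      by (simp add: inner_diff_left)
    also have "\<dots> = 0" using that \<open>y1 - y2 \<in> S\<close> by simp
    finally show ?thesis by simp
  qed
  have "\<exists>!y. y \<in> S \<and> (\<forall>w\<in>S. (x - y) \<bullet> w = 0)" using ex uniq by blast
  then have "orth_proj S x \<in> S \<and> (\<forall>w\<in>S. (x - orth_proj S x) \<bullet> w = 0)"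
    unfolding orth_proj_def by (rule theI')
  then show "orth_proj S x \<in> S" and "z \<in> S \<Longrightarrow> (x - orth_proj S x) \<bullet> z = 0" by auto
qed

locale coherent_dictionary = coherent_family "\<lambda>j. column j D" J mu
  for D :: "real^'p^'m" and J :: "'p set" and mu :: real
begin

lemma injective_on_J:
  assumes "\<And>j. j \<notin> J \<Longrightarrow> h$j = 0" and "D *v h = 0"
  shows "h = 0"
  using independent_on_J[of "\<lambda>j. h$j"] mult_vec_eq_sum_columns[of J h D] assms
  by (auto simp: vec_eq_iff)

lemma mult_vec_alpha_hat:
  assumes "J = {j. alpha0$j \<noteq> 0}"
  shows "D *v alpha_hat D x lam alpha0 = (\<Sum>j\<in>J. alpha_hat D x lam alpha0 $ j *\<^sub>R column j D)"
  using alpha_hat_outside[where D = D, OF assms injective_on_J] by (rule mult_vec_eq_sum_columns) blast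

lemma alpha_hat_sign:
  assumes J: "J = {j. alpha0$j \<noteq> 0}" and lam: "0 < lam"
    and alpha_min: "\<And>j. j \<in> J \<Longrightarrow> 9/4 * lam \<le> \<bar>alpha0$j\<bar>"
    and residual: "\<And>j. j \<in> J \<Longrightarrow>
      \<bar>column j D \<bullet> (x - D *v alpha0)\<bar> < lam * (2 - 1 / (1 - real (card J) * mu))"
    and i: "i \<in> J"
  shows "sgn (alpha_hat D x lam alpha0 $ i) = sgn (alpha0$i)"
proof -
  define q where "q = 1 / (1 - real (card J) * mu)"
  define u where "u = alpha_hat D x lam alpha0 - alpha0"
  have "D *v u = (\<Sum>j\<in>J. u$j *\<^sub>R column j D)"
    using alpha_hat_outside[where D = D and x = x and lam = lam, OF J injective_on_J] J unfolding u_def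
    by (intro mult_vec_eq_sum_columns) auto
  then have "\<bar>column j D \<bullet> (\<Sum>l\<in>J. u$l *\<^sub>R column l D)\<bar> < lam * (3 - q)" if "j \<in> J" for j
  proof -
    have "column j D \<bullet> (D *v u) = column j D \<bullet> (x - D *v alpha0) - lam * sgn (alpha0$j)"
      using alpha_hat_inside[where D = D and x = x and lam = lam, OF J injective_on_J that]
      by (simp add: u_def matrix_vector_mult_diff_distrib inner_diff_right)
    moreover have "\<bar>lam * sgn (alpha0$j)\<bar> \<le> lam" using lam by (simp add: abs_mult abs_sgn_eq)
    ultimately show ?thesis
      using residual[OF that] \<open>D *v u = _\<close> unfolding q_def by (auto simp: algebra_simps)
  qed
  from abs_coeff_less[OF this i] have "\<bar>u$i\<bar> < lam * (q * (3 - q))"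
    unfolding q_def by (simp add: field_simps)
  also have "\<dots> \<le> lam * (9/4)" \<comment> \<open>the origin of the constant \<open>9/4\<close>\<close>
  proof -
    have "q * (3 - q) \<le> 9/4"
      using sum_squares_ge_zero[of "q - 3/2" 0] by (simp add: power2_eq_square algebra_simps)
    then show ?thesis using lam by (intro mult_left_mono) auto
  qed
  finally have "\<bar>alpha_hat D x lam alpha0 $ i - alpha0$i\<bar> < \<bar>alpha0$i\<bar>"
    using alpha_min[OF i] unfolding u_def by simp
  then show ?thesis by (auto simp: sgn_if abs_if split: if_splits)
qed

lemma alpha_hat_residual_outside:
  assumes J: "J = {j. alpha0$j \<noteq> 0}" and lam: "0 \<le> lam"
    and residual: "\<And>j. j \<notin> J \<Longrightarrow>
      \<bar>column j D \<bullet> (x - proj_cols D J x)\<bar> < lam * (2 - 1 / (1 - real (card J) * mu))"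
    and j: "j \<notin> J"
  shows "\<bar>column j D \<bullet> (x - D *v alpha_hat D x lam alpha0)\<bar> < lam"
proof -
  define q where "q = 1 / (1 - real (card J) * mu)"
  define a where "a = alpha_hat D x lam alpha0"
  define P where "P = proj_cols D J x"
  \<comment> \<open>\<open>P - D \<alpha>\<close> lies in the span of the \<open>J\<close>-columns and its Gram image is \<open>\<lambda> sgn \<alpha>\<^sub>0\<close>\<close>
  have subspace: "subspace (span ((\<lambda>j. column j D) ` J))" by (rule subspace_span)
  obtain w where "P = (\<Sum>l\<in>J. w l *\<^sub>R column l D)"
    using span_image_sum[OF finite_J orth_proj_subspace(1)[OF subspace]]
    unfolding P_def proj_cols_def by blast
  then have P_Da: "P - D *v a = (\<Sum>l\<in>J. (w l - a$l) *\<^sub>R column l D)"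
    unfolding a_def mult_vec_alpha_hat[OF J] by (simp add: scaleR_diff_left sum_subtractf)
  have rows: "\<bar>column i D \<bullet> (\<Sum>l\<in>J. (w l - a$l) *\<^sub>R column l D)\<bar> \<le> lam" if i: "i \<in> J" for i
  proof -
    have "column i D \<bullet> (x - P) = 0"
      using orth_proj_subspace(2)[OF subspace, of "column i D" x] i
      unfolding P_def proj_cols_def by (simp add: span_base inner_commute)
    then have "column i D \<bullet> (P - D *v a) = column i D \<bullet> (x - D *v a)"
      by (simp add: inner_diff_right)
    also have "\<dots> = lam * sgn (alpha0$i)"
      unfolding a_def by (rule alpha_hat_inside[where D = D, OF J injective_on_J i])
    finally show ?thesis using lam unfolding P_Da by (simp add: abs_mult abs_sgn_eq)
  qed
  then have "\<bar>w i - a$i\<bar> \<le> lam * q" if "i \<in> J" for i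
    using abs_coeff_le[OF rows that] unfolding q_def by simp
  from abs_inner_outside_le[OF j this]
  have "\<bar>column j D \<bullet> (P - D *v a)\<bar> \<le> lam * (q - 1)"
    unfolding P_Da q_def using card_mu_less_1 by (simp add: field_simps)
  moreover have "column j D \<bullet> (x - D *v a) = column j D \<bullet> (x - P) + column j D \<bullet> (P - D *v a)"
    by (simp add: inner_diff_right)
  ultimately show ?thesis
    using residual[OF j] unfolding a_def[symmetric] P_def[symmetric] q_def[symmetric]
    by (auto simp: algebra_simps)
qed

lemma lasso_support_recovery:
  assumes J: "J = {j. alpha0$j \<noteq> 0}" and lam: "0 < lam"
    and alpha_min: "\<And>j. j \<in> J \<Longrightarrow> 9/4 * lam \<le> \<bar>alpha0$j\<bar>"
    and residual_J: "\<And>j. j \<in> J \<Longrightarrow>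
      \<bar>column j D \<bullet> (x - D *v alpha0)\<bar> < lam * (2 - 1 / (1 - real (card J) * mu))"
    and residual_outside: "\<And>j. j \<notin> J \<Longrightarrow>
      \<bar>column j D \<bullet> (x - proj_cols D J x)\<bar> < lam * (2 - 1 / (1 - real (card J) * mu))"
  shows "{a. \<forall>b. lasso_obj D x lam a \<le> lasso_obj D x lam b} = {alpha_hat D x lam alpha0}"
proof -
  have support: "alpha_hat D x lam alpha0 $ j \<noteq> 0 \<longleftrightarrow> j \<in> J" for j
  proof
    show "j \<in> J" if "alpha_hat D x lam alpha0 $ j \<noteq> 0"
      using alpha_hat_outside[where D = D, OF J injective_on_J] that by blast
    show "alpha_hat D x lam alpha0 $ j \<noteq> 0" if "j \<in> J"
      using alpha_hat_sign[OF J lam alpha_min residual_J that] that J by (auto simp: sgn_0_0)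
  qed
  show ?thesis
  proof (rule lasso_unique_minimizer)
    show "0 \<le> lam" using lam by simp
  next
    fix j assume "alpha_hat D x lam alpha0 $ j \<noteq> 0"
    then have "j \<in> J" using support by blast
    then show "column j D \<bullet> (x - D *v alpha_hat D x lam alpha0) = lam * sgn (alpha_hat D x lam alpha0 $ j)"
      using alpha_hat_inside[where D = D, OF J injective_on_J]
        alpha_hat_sign[OF J lam alpha_min residual_J] by simp
  next
    fix j assume "alpha_hat D x lam alpha0 $ j = 0"
    then have "j \<notin> J" using support by blast
    then show "\<bar>column j D \<bullet> (x - D *v alpha_hat D x lam alpha0)\<bar> < lam"
      using alpha_hat_residual_outside[OF J less_imp_le[OF lam] residual_outside] by blast
  next
    fix h assume "\<And>j. alpha_hat D x lam alpha0 $ j = 0 \<Longrightarrow> h $ j = 0" "D *v h = 0"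
    then show "h = 0" using support by (intro injective_on_J) auto
  qed
qed

end

lemma finite_abs_inner_columns:
  fixes D0 :: "real^'p^'m"
  shows "finite {\<bar>column i D0 \<bullet> column j D0\<bar> | i j. i \<noteq> j}"
  by (rule finite_subset[of _ "(\<lambda>(i, j). \<bar>column i D0 \<bullet> column j D0\<bar>) ` UNIV"]) auto

lemma abs_inner_le_mutual_coherence:
  fixes D0 :: "real^'p^'m"
  shows "i \<noteq> j \<Longrightarrow> \<bar>column i D0 \<bullet> column j D0\<bar> \<le> mutual_coherence D0"
  unfolding mutual_coherence_def using finite_abs_inner_columns by (auto intro: Max_ge)

lemma mutual_coherence_nonneg: "0 \<le> mutual_coherence (D0 :: real^'p^'m)"
  unfolding mutual_coherence_def using finite_abs_inner_columns by (auto intro: Max_ge)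

lemma column_Dpath:
  "column j (Dpath D0 W v t) = cos (v$j * t) *\<^sub>R column j D0 + sin (v$j * t) *\<^sub>R column j W"
  by (simp add: vec_eq_iff column_def Dpath_def mult.commute)

lemma Dpath_column_unit:
  fixes D0 W :: "real^'p^'m"
  assumes "norm (column j D0) = 1" and "W \<in> W_set D0"
  shows "column j (Dpath D0 W v t) \<bullet> column j (Dpath D0 W v t) = 1"
proof -
  have "column j D0 \<bullet> column j D0 = 1" "column j W \<bullet> column j D0 = 0" "column j W \<bullet> column j W = 1"
    using assms by (auto simp: W_set_def norm_eq_sqrt_inner)
  then show ?thesis
    unfolding column_Dpath
    by (simp add: inner_add_left inner_add_right inner_commute algebra_simps flip: power2_eq_square)
qed

lemma abs_sum4_le: "\<bar>a + b + c + e\<bar> \<le> \<bar>a\<bar> + \<bar>b\<bar> + \<bar>c\<bar> + (\<bar>e\<bar> :: real)"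
  by linarith

lemma Dpath_coherence:
  fixes D0 W :: "real^'p^'m"
  assumes unit_cols: "\<forall>j. norm (column j D0) = 1" and W: "W \<in> W_set D0"
    and v: "norm v = 1" and t': "0 \<le> t'" "t' \<le> t" and ij: "i \<noteq> j"
  shows "\<bar>column i (Dpath D0 W v t') \<bullet> column j (Dpath D0 W v t')\<bar> \<le> mu_t D0 t"
proof -
  have sin_le: "\<bar>sin (v$l * t')\<bar> \<le> t" for l
  proof -
    have "\<bar>sin (v$l * t')\<bar> \<le> \<bar>v$l\<bar> * t'" using abs_sin_x_le_abs_x[of "v$l * t'"] t' by (simp add: abs_mult)
    also have "\<dots> \<le> 1 * t" using component_le_norm_cart[of v l] v t' by (intro mult_mono) auto
    finally show ?thesis by simp
  qed
  have unit_inner: "\<bar>a \<bullet> b\<bar> \<le> 1" if "norm a = 1" "norm b = 1" for a b :: "real^'m"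
    using Cauchy_Schwarz_ineq2[of a b] that by simp
  have W_unit: "norm (column l W) = 1" for l
    using W by (simp add: W_set_def norm_eq_sqrt_inner)
  have between_ones: "\<bar>p * q * r\<bar> \<le> \<bar>q\<bar>" if "\<bar>p\<bar> \<le> 1" "\<bar>r\<bar> \<le> 1" for p q r :: real
  proof -
    have "\<bar>p\<bar> * \<bar>q\<bar> * \<bar>r\<bar> \<le> 1 * \<bar>q\<bar> * 1" using that by (intro mult_mono mult_right_mono) auto
    then show ?thesis by (simp add: abs_mult)
  qed
  define ci cj si sj where "ci = cos (v$i * t')" and "cj = cos (v$j * t')"
    and "si = sin (v$i * t')" and "sj = sin (v$j * t')"
  have expand: "column i (Dpath D0 W v t') \<bullet> column j (Dpath D0 W v t') =
      ci * (column i D0 \<bullet> column j D0) * cj + ci * sj * (column i D0 \<bullet> column j W)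
      + cj * si * (column i W \<bullet> column j D0) + si * sj * (column i W \<bullet> column j W)"
    unfolding column_Dpath ci_def cj_def si_def sj_def
    by (simp add: inner_add_left inner_add_right algebra_simps)
  have A: "\<bar>ci * (column i D0 \<bullet> column j D0) * cj\<bar> \<le> mutual_coherence D0"
    using order_trans[OF between_ones[of ci cj] abs_inner_le_mutual_coherence[OF ij]]
    unfolding ci_def cj_def by (simp add: abs_cos_le_one)
  have B: "\<bar>ci * sj * (column i D0 \<bullet> column j W)\<bar> \<le> t"
    using order_trans[OF between_ones[of ci _ sj] sin_le[of j, folded sj_def]] unit_inner unit_cols W_unit
    unfolding ci_def sj_def by (simp add: abs_cos_le_one)
  have C: "\<bar>cj * si * (column i W \<bullet> column j D0)\<bar> \<le> t"
    using order_trans[OF between_ones[of cj _ si] sin_le[of i, folded si_def]] unit_inner unit_cols W_unit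
    unfolding cj_def si_def by (simp add: abs_cos_le_one)
  have E: "\<bar>si * sj * (column i W \<bullet> column j W)\<bar> \<le> t"
    using order_trans[OF between_ones[of si _ sj] sin_le[of j, folded sj_def]] unit_inner W_unit
    unfolding si_def sj_def by (simp add: abs_sin_le_one)
  have "mutual_coherence D0 + t + t + t = mu_t D0 t" by (simp add: mu_t_def)
  then show ?thesis
    unfolding expand by (metis order_trans[OF abs_sum4_le add_mono[OF add_mono[OF add_mono[OF A B] C] E]])
qed

theorem corollary3:
  fixes D0 W :: "real^'p^'m" and v :: "real^'p" and x :: "real^'m"
    and alpha0 :: "real^'p" and J :: "'p set" and k :: nat
    and t t' lam alpha_min :: real
  assumes unit_cols: "\<forall>j. norm (column j D0) = 1"
    and W: "W \<in> W_set D0"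
    and v: "norm v = 1"
    and supp: "J = {j. alpha0$j \<noteq> 0}"
    and k: "card J = k"
    and coh: "real k * mu_t D0 t \<le> 1/2"
    and t': "0 \<le> t'" "t' \<le> t"
    and lam: "lam > 0"
    and amin1: "9/4 * lam \<le> alpha_min"
    and amin2: "\<forall>j\<in>J. alpha_min \<le> \<bar>alpha0$j\<bar>"
    and c1: "linf_on J (\<lambda>j. column j (Dpath D0 W v t') \<bullet> (x - Dpath D0 W v t' *v alpha0))
               < lam * (2 - (Q_t D0 k t)\<^sup>2)"
    and c2: "linf_on (- J) (\<lambda>j. column j (Dpath D0 W v t') \<bullet>
                 (x - proj_cols (Dpath D0 W v t') J x))
               < lam * (2 - (Q_t D0 k t)\<^sup>2)"
  shows "{a. \<forall>b. lasso_obj (Dpath D0 W v t') x lam a \<le> lasso_obj (Dpath D0 W v t') x lam b}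
           = {alpha_hat (Dpath D0 W v t') x lam alpha0}"
proof -
  have mu_nonneg: "0 \<le> mu_t D0 t"
    using mutual_coherence_nonneg[of D0] t' by (simp add: mu_t_def)
  interpret coherent_dictionary "Dpath D0 W v t'" J "mu_t D0 t"
  proof
    show "column i (Dpath D0 W v t') \<bullet> column i (Dpath D0 W v t') = 1" for i
      using Dpath_column_unit unit_cols W by blast
    show "\<bar>column i (Dpath D0 W v t') \<bullet> column j (Dpath D0 W v t')\<bar> \<le> mu_t D0 t"
      if "i \<noteq> j" for i j
      using Dpath_coherence[OF unit_cols W v t' that] .
  qed (use mu_nonneg coh k in simp_all)
  have Q: "(Q_t D0 k t)\<^sup>2 = 1 / (1 - real (card J) * mu_t D0 t)"
    using coh k by (simp add: Q_t_def power_divide)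
  have linf_le: "finite A \<Longrightarrow> j \<in> A \<Longrightarrow> \<bar>f j\<bar> \<le> linf_on A f" for A f and j :: 'p
    unfolding linf_on_def by (intro Max_ge) auto
  show ?thesis
  proof (rule lasso_support_recovery[OF supp lam])
    show "9/4 * lam \<le> \<bar>alpha0$j\<bar>" if "j \<in> J" for j
      using amin1 amin2 that by force
    show "\<bar>column j (Dpath D0 W v t') \<bullet> (x - Dpath D0 W v t' *v alpha0)\<bar>
        < lam * (2 - 1 / (1 - real (card J) * mu_t D0 t))" if "j \<in> J" for j
      by (rule le_less_trans[OF linf_le[OF finite_J that] c1[unfolded Q]])
    show "\<bar>column j (Dpath D0 W v t') \<bullet> (x - proj_cols (Dpath D0 W v t') J x)\<bar>
        < lam * (2 - 1 / (1 - real (card J) * mu_t D0 t))" if "j \<notin> J" for j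
      by (rule le_less_trans[OF linf_le[OF finite Compl_iff[THEN iffD2, OF that]] c2[unfolded Q]])
  qed
qed

end
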